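(* Let $n\ge1$ and $\sigma\in\mathfrak{S}_n$. Then $\Delta(\sigma')\sqsubset\Delta(\sigma)$. Moreover: if $\Delta(\sigma')$ is a prefix of $\Delta(\sigma)$, then $\sigma$ is obtained from $\sigma'$ by inserting $n$ in the last position. Otherwise, let $k$ be the index of the first step at which the paths $\Delta(\sigma')$ and $\Delta(\sigma)$ differ; if $k$ is odd, $\sigma$ is obtained from $\sigma'$ by inserting $n$ immediately after the letter $\frac{k+1}{2}$, and if $k$ is even, $\sigma$ is obtained from $\sigma'$ by inserting $n$ immediately before the letter $\frac{k}{2}$.
   Context: Permutations $\sigma\in\mathfrak{S}_n$ are written as words $\sigma_1\cdots\sigma_n$, with the conventions $\sigma_0=0$, $\sigma_{n+1}=n+1$. A value $\sigma_i$ ($1\le i\le n$) is a peak if $\sigma_{i-1}<\sigma_i>\sigma_{i+1}$, a valley if $\sigma_{i-1}>\sigma_i<\sigma_{i+1}$, a double ascent if $\sigma_{i-1}<\sigma_i<\sigma_{i+1}$, a double descent if $\sigma_{i-1}>\sigma_i>\sigma_{i+1}$. The profile $\Delta(\sigma)$ is the word $w_1\cdots w_{2n}$ over $\{\nearrow,\searrow\}$ where, for each value $j\in\{1,\dots,n\}$, $w_{2j-1}w_{2j}$ is $\nearrow\nearrow$ if $j$ is a valley, $\searrow\searrow$ if $j$ is a peak, $\nearrow\searrow$ if $j$ is a double ascent, $\searrow\nearrow$ if $j$ is a double descent; it is a Dyck path of length $2n$ (the empty permutation has the empty profile). $\sigma'\in\mathfrak{S}_{n-1}$ is the word obtained from $\sigma$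 by deleting the letter $n$. A Dyck path of length $2m$ is a lattice path from $(0,0)$ to $(2m,0)$ with steps $\nearrow=(1,1)$, $\searrow=(1,-1)$ never going below the $x$-axis; $P(x)$ denotes its height at abscissa $x$. A cell is a point $(a,b)\in\mathbb{Z}^2$ with $b\ge0$, $a+b$ even (the tilted square with vertices $(a,b),(a+1,b\pm1),(a+2,b)$). The Dyck shape of $P$ (length $2m$) is $S(P)=\{(a,b): b\ge0,\ a+b\text{ even},\ 0\le a\le 2m-2,\ b+1\le P(a+1)\}$. Cells are adjacent if they differ by $(\pm1,\pm1)$. A ribbon is a nonempty set of cells, connected for adjacency, containing no four cells $(a,b),(a+1,b+1),(a+1,b-1),(a+2,b)$. For Dyck paths $D$ of length $2m$ and $E$ of length $2m+2$, $D\sqsubset E$ means $S(D)\subseteq S(E)$ and $S(E)\setminus S(D)$ is a ribbon. *)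

theory Defs
  imports Main "HOL-Library.Sublist"
begin

definition is_perm :: "nat \<Rightarrow> nat list \<Rightarrow> bool" where
  "is_perm n s \<longleftrightarrow> distinct s \<and> set s = {1..n}"

definition letter :: "nat list \<Rightarrow> nat \<Rightarrow> nat" where
  "letter s i = (if i = 0 then 0 else if i = length s + 1 then length s + 1 else s ! (i - 1))"

definition pos :: "nat list \<Rightarrow> nat \<Rightarrow> nat" where
  "pos s j = (THE i. 1 \<le> i \<and> i \<le> length s \<and> s ! (i - 1) = j)"

definition is_peak :: "nat list \<Rightarrow> nat \<Rightarrow> bool" where
  "is_peak s j = (let i = pos s j in letter s (i - 1) < letter s i \<and> letter s i > letter s (i + 1))"
definition is_valley :: "nat list \<Rightarrow> nat \<Rightarrow> bool" where
  "is_valley s j = (let i = pos s j in letter s (i - 1) > letter s i \<and> letter s i < letter s (i + 1))"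
definition is_dasc :: "nat list \<Rightarrow> nat \<Rightarrow> bool" where
  "is_dasc s j = (let i = pos s j in letter s (i - 1) < letter s i \<and> letter s i < letter s (i + 1))"
definition is_ddesc :: "nat list \<Rightarrow> nat \<Rightarrow> bool" where
  "is_ddesc s j = (let i = pos s j in letter s (i - 1) > letter s i \<and> letter s i > letter s (i + 1))"

datatype step = Up | Down

definition steps_of :: "nat list \<Rightarrow> nat \<Rightarrow> step list" where
  "steps_of s j =
     (if is_valley s j then [Up, Up]
      else if is_peak s j then [Down, Down]
      else if is_dasc s j then [Up, Down]
      else [Down, Up])"

definition profile :: "nat list \<Rightarrow> step list" where
  "profile s = concat (map (steps_of s) [1..<length s + 1])"

definition step_val :: "step \<Rightarrow> int" where
  "step_val st = (if st = Up then 1 else -1)"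

definition height :: "step list \<Rightarrow> int \<Rightarrow> int" where
  "height P x = sum_list (map step_val (take (nat x) P))"

definition dyck :: "step list \<Rightarrow> bool" where
  "dyck P \<longleftrightarrow> even (length P) \<and> (\<forall>x\<le>length P. height P (int x) \<ge> 0) \<and> height P (int (length P)) = 0"

type_synonym cell = "int \<times> int"

definition dyck_shape :: "step list \<Rightarrow> cell set" where
  "dyck_shape P = {(a, b). b \<ge> 0 \<and> even (a + b) \<and> 0 \<le> a \<and> a \<le> int (length P) - 2
                       \<and> b + 1 \<le> height P (a + 1)}"

definition adjacent :: "cell \<Rightarrow> cell \<Rightarrow> bool" where
  "adjacent c d \<longleftrightarrow> \<bar>fst c - fst d\<bar> = 1 \<and> \<bar>snd c - snd d\<bar> = 1"

definition cell_connected :: "cell set \<Rightarrow> bool" where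
  "cell_connected R \<longleftrightarrow>
     (\<forall>c\<in>R. \<forall>d\<in>R. (c, d) \<in> {(x, y). x \<in> R \<and> y \<in> R \<and> adjacent x y}\<^sup>*)"

definition is_cell :: "cell \<Rightarrow> bool" where
  "is_cell c \<longleftrightarrow> snd c \<ge> 0 \<and> even (fst c + snd c)"

definition ribbon :: "cell set \<Rightarrow> bool" where
  "ribbon R \<longleftrightarrow> R \<noteq> {} \<and> (\<forall>c\<in>R. is_cell c) \<and> cell_connected R \<and>
     \<not> (\<exists>a b. (a, b) \<in> R \<and> (a + 1, b + 1) \<in> R \<and> (a + 1, b - 1) \<in> R \<and> (a + 2, b) \<in> R)"

definition ribbon_sub :: "step list \<Rightarrow> step list \<Rightarrow> bool" where
  "ribbon_sub D E \<longleftrightarrow> dyck D \<and> dyck E \<and> length E = length D + 2 \<and>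
     dyck_shape D \<subseteq> dyck_shape E \<and> ribbon (dyck_shape E - dyck_shape D)"

definition first_diff :: "step list \<Rightarrow> step list \<Rightarrow> nat" where
  "first_diff D E = (LEAST k. 1 \<le> k \<and> k \<le> length D \<and> k \<le> length E \<and> D ! (k - 1) \<noteq> E ! (k - 1))"

end

theory Submission
  imports Defs
begin

text \<open>Each letter j of a permutation contributes the two steps [Up iff its right neighbour exceeds j,
Up iff its left neighbour exceeds j].  Inserting the maximum n between u and v can therefore
only change the right step of the last letter a of u and the left step of the first letter b
of v, and it appends the steps of n.  If v is empty, n is a double ascent and Up Down is
appended; if a > b, the right step of a turns from Down to Up; otherwise the left step of b
does; in the last two cases n is a peak and Down Down is appended.  Raising a Down step at
index i lifts the path by 2 on (i, 2m] and by 1 at 2m + 1, so the new cells of the Dyck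
shape are the topmost cells over the columns i, ..., 2m, one per column: a ribbon.  The
raised step is the first difference, and its index tells next to which letter n sits.\<close>

definition up_if :: "bool \<Rightarrow> step" where
  "up_if b = (if b then Up else Down)"

lemma pos_append_Cons:
  assumes "distinct (p @ j # q)"
  shows "pos (p @ j # q) j = Suc (length p)"
  unfolding pos_def
proof (rule the_equality)
  fix i assume i: "1 \<le> i \<and> i \<le> length (p @ j # q) \<and> (p @ j # q) ! (i - 1) = j"
  have "(p @ j # q) ! (i - 1) = (p @ j # q) ! length p" and "i - 1 < length (p @ j # q)"
    using i by (auto simp: nth_append)
  moreover have "length p < length (p @ j # q)" by simp
  ultimately have "i - 1 = length p"
    by (metis nth_eq_iff_index_eq[OF assms])
  with i show "i = Suc (length p)" by linarith
qed (simp add: nth_append)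

text \<open>The right and left neighbours of j are written hd (q @ [length + 1]) and last (0 # p),
which builds in the sentinels \<sigma>(n+1) = n + 1 and \<sigma>(0) = 0.\<close>

lemma steps_of_append_Cons:
  assumes "distinct (p @ j # q)" and "0 < j" and "j \<le> length (p @ j # q)"
  shows "steps_of (p @ j # q) j =
    [up_if (j < hd (q @ [Suc (length (p @ j # q))])), up_if (j < last (0 # p))]"
proof -
  let ?s = "p @ j # q" and ?l = "last (0 # p)" and ?r = "hd (q @ [Suc (length (p @ j # q))])"
  have "letter ?s (length p) = ?l"
    by (cases p rule: rev_cases) (auto simp: letter_def nth_append)
  moreover have "letter ?s (Suc (length p)) = j" by (simp add: letter_def nth_append)
  moreover have "letter ?s (Suc (Suc (length p))) = ?r"
    by (cases q) (auto simp: letter_def nth_append)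
  moreover have "?l \<noteq> j" and "?r \<noteq> j"
    using assms by (cases p rule: rev_cases; cases q; auto)+
  ultimately show ?thesis
    unfolding steps_of_def is_valley_def is_peak_def is_dasc_def Let_def pos_append_Cons[OF assms(1)]
    by (cases "j < ?l"; cases "j < ?r") (auto simp: up_if_def)
qed

lemma nth_concat_map_const_length:
  assumes "\<And>x. x \<in> set xs \<Longrightarrow> length (f x) = c" and "k < c * length xs"
  shows "concat (map f xs) ! k = f (xs ! (k div c)) ! (k mod c)"
  using assms
proof (induction xs arbitrary: k)
  case (Cons x xs)
  show ?case
  proof (cases "k < c")
    case False
    then have "concat (map f xs) ! (k - c) = f (xs ! ((k - c) div c)) ! ((k - c) mod c)"
      using Cons by auto
    moreover have "0 < c" using False Cons.prems(2) by (cases c) auto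
    then have "k div c = Suc ((k - c) div c)" "k mod c = (k - c) mod c"
      using False by (simp_all add: le_div_geq le_mod_geq)
    ultimately show ?thesis using False Cons.prems by (simp add: nth_append)
  qed (use Cons.prems in \<open>simp add: nth_append\<close>)
qed simp

lemma length_steps_of [simp]: "length (steps_of s j) = 2"
  by (simp add: steps_of_def)

lemma length_profile: "length (profile s) = 2 * length s"
  by (simp add: profile_def length_concat comp_def sum_list_triv del: upt_Suc)

lemma nth_profile:
  assumes "k < 2 * length s"
  shows "profile s ! k = steps_of s (Suc (k div 2)) ! (k mod 2)"
proof -
  have "profile s ! k = steps_of s ([1..<length s + 1] ! (k div 2)) ! (k mod 2)"
    unfolding profile_def using assms
    by (intro nth_concat_map_const_length) auto
  then show ?thesis using assms by (simp del: upt_Suc)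
qed

lemma nth_profile_letter:
  assumes "distinct (p @ j # q)" and "0 < j" and "j \<le> length (p @ j # q)"
  shows "profile (p @ j # q) ! (2 * j - 2) = up_if (j < hd (q @ [Suc (length (p @ j # q))]))"
    and "profile (p @ j # q) ! (2 * j - 1) = up_if (j < last (0 # p))"
proof -
  have "Suc ((2 * j - 2) div 2) = j" "(2 * j - 2) mod 2 = 0"
    "Suc ((2 * j - 1) div 2) = j" "(2 * j - 1) mod 2 = 1"
    using assms(2) by presburger+
  then show "profile (p @ j # q) ! (2 * j - 2) = up_if (j < hd (q @ [Suc (length (p @ j # q))]))"
    and "profile (p @ j # q) ! (2 * j - 1) = up_if (j < last (0 # p))"
    using assms by (simp_all add: nth_profile steps_of_append_Cons del: length_append)
qed

section \<open>Removing the maximal letter\<close>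

lemma is_perm_length: "is_perm n s \<Longrightarrow> length s = n"
  unfolding is_perm_def using distinct_card by fastforce

lemma is_perm_insert_max:
  assumes "is_perm n (u @ n # v)"
  shows "length (u @ v) = n - 1" and "distinct (u @ v)" and "x \<in> set (u @ v) \<longleftrightarrow> 0 < x \<and> x < n"
    and "distinct (u @ n # v)" and "0 < n"
proof -
  have "n \<in> set (u @ n # v)" by simp
  then show "0 < n" using assms unfolding is_perm_def by (metis atLeastAtMost_iff One_nat_def Suc_le_eq)
  show d: "distinct (u @ n # v)" using assms unfolding is_perm_def by simp
  have "set (u @ v) = set (u @ n # v) - {n}" using d by auto
  also have "\<dots> = {1..<n}" using assms unfolding is_perm_def by auto
  finally show "x \<in> set (u @ v) \<longleftrightarrow> 0 < x \<and> x < n" by auto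
  show "distinct (u @ v)" using d by simp
  show "length (u @ v) = n - 1" using is_perm_length[OF assms] by simp
qed

lemma is_perm_remove_max:
  assumes "is_perm n (u @ n # v)"
  shows "is_perm (n - 1) (u @ v)" and "removeAll n (u @ n # v) = u @ v"
proof -
  note facts = is_perm_insert_max[OF assms]
  have "set (u @ v) = {1..n - 1}"
  proof (rule set_eqI)
    fix x show "x \<in> set (u @ v) \<longleftrightarrow> x \<in> {1..n - 1}" using facts(3)[of x] facts(5) by auto
  qed
  then show "is_perm (n - 1) (u @ v)" unfolding is_perm_def using facts(2) by simp
  show "removeAll n (u @ n # v) = u @ v" using facts(4) by simp
qed

lemma is_perm_max_split:
  assumes "is_perm n s" and "0 < n"
  obtains u v where "s = u @ n # v"
proof -
  have "n \<in> set s" using assms unfolding is_perm_def by simp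
  then show ?thesis using split_list that by metis
qed

lemma steps_of_insert_max:
  assumes P: "is_perm n (u @ n # v)" and j: "j \<in> set (u @ v)"
  shows "steps_of (u @ n # v) j =
    [if u \<noteq> [] \<and> j = last u then Up else steps_of (u @ v) j ! 0,
     if v \<noteq> [] \<and> j = hd v then Up else steps_of (u @ v) j ! 1]"
proof -
  note facts = is_perm_insert_max[OF P]
  have jn: "0 < j" "j < n" using facts(3) j by blast+
  have ls: "length (u @ n # v) = n" using facts(1) jn by simp
  from j consider "j \<in> set u" | "j \<in> set v" by auto
  then show ?thesis
  proof cases
    case 1
    then obtain p q where u: "u = p @ j # q" by (meson split_list)
    have "steps_of (p @ j # (q @ n # v)) j = [up_if (j < hd ((q @ n # v) @ [Suc n])), up_if (j < last (0 # p))]"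
      using steps_of_append_Cons[of p j "q @ n # v"] facts(4) jn ls u by simp
    moreover have "steps_of (p @ j # (q @ v)) j = [up_if (j < hd ((q @ v) @ [n])), up_if (j < last (0 # p))]"
      using steps_of_append_Cons[of p j "q @ v"] facts jn u by simp
    moreover have "j = last u \<longleftrightarrow> q = []" "v \<noteq> [] \<Longrightarrow> j \<noteq> hd v"
      using facts(2) u by (cases q rule: rev_cases; auto)+
    ultimately show ?thesis using u jn by (cases "q = []") (auto simp: up_if_def)
  next
    case 2
    then obtain p q where v: "v = p @ j # q" by (meson split_list)
    have "steps_of ((u @ n # p) @ j # q) j = [up_if (j < hd (q @ [Suc n])), up_if (j < last (0 # u @ n # p))]"
      using steps_of_append_Cons[of "u @ n # p" j q] facts(4) jn ls v by simp
    moreover have "steps_of ((u @ p) @ j # q) j = [up_if (j < hd (q @ [n])), up_if (j < last (0 # u @ p))]"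
      using steps_of_append_Cons[of "u @ p" j q] facts jn v by simp
    moreover have "j = hd v \<longleftrightarrow> p = []" "u \<noteq> [] \<Longrightarrow> j \<noteq> last u"
      using facts(2) v by (cases p; auto)+
    moreover have "j < hd (q @ [Suc n]) \<longleftrightarrow> j < hd (q @ [n])" using jn by (cases q) auto
    ultimately show ?thesis using v jn by (cases "p = []") (auto simp: up_if_def)
  qed
qed

lemma nth_profile_insert_max:
  assumes P: "is_perm n (u @ n # v)" and k: "k < 2 * (n - 1)"
  shows "profile (u @ n # v) ! k =
    (if u \<noteq> [] \<and> k = 2 * last u - 2 \<or> v \<noteq> [] \<and> k = 2 * hd v - 1 then Up else profile (u @ v) ! k)"
proof -
  note facts = is_perm_insert_max[OF P]
  define j where "j = Suc (k div 2)"
  have j: "j \<in> set (u @ v)" using facts(3) k unfolding j_def by simp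
  have "profile (u @ n # v) ! k = steps_of (u @ n # v) j ! (k mod 2)"
    and "profile (u @ v) ! k = steps_of (u @ v) j ! (k mod 2)"
    using k facts(1) unfolding j_def by (simp_all add: nth_profile)
  moreover have "k = 2 * a - 2 \<longleftrightarrow> j = a \<and> k mod 2 = 0"
    and "k = 2 * a - 1 \<longleftrightarrow> j = a \<and> k mod 2 = 1" if "0 < a" for a
    using that unfolding j_def by presburger+
  moreover have "u \<noteq> [] \<Longrightarrow> 0 < last u" "v \<noteq> [] \<Longrightarrow> 0 < hd v"
    using facts(3)[of "last u"] facts(3)[of "hd v"] by simp_all
  ultimately show ?thesis
    using steps_of_insert_max[OF P j] by (cases "k mod 2 = 0") (auto simp: mod2_eq_if)
qed

lemma profile_insert_max_last_steps:
  assumes P: "is_perm n (u @ n # v)"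
  shows "profile (u @ n # v) ! (2 * n - 2) = (if v = [] then Up else Down)"
    and "profile (u @ n # v) ! (2 * n - 1) = Down"
proof -
  note facts = is_perm_insert_max[OF P]
  have n: "0 < n" and ln: "length (u @ n # v) = n" using facts(1,5) by auto
  have "n < hd (v @ [Suc n]) \<longleftrightarrow> v = []" and "\<not> n < last (0 # u)"
    using facts(3)[of "hd v"] facts(3)[of "last u"] by (cases v; cases u rule: rev_cases; simp)+
  then show "profile (u @ n # v) ! (2 * n - 2) = (if v = [] then Up else Down)"
    and "profile (u @ n # v) ! (2 * n - 1) = Down"
    using nth_profile_letter[of u n v] facts(4) n ln by (simp_all add: up_if_def)
qed

section \<open>Raising a Down step\<close>

text \<open>For i = length D this is D @ [Up, Down].\<close>

definition raise_at :: "step list \<Rightarrow> nat \<Rightarrow> step list" where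
  "raise_at D i = (D @ [Down])[i := Up] @ [Down]"

lemma length_raise_at [simp]: "length (raise_at D i) = length D + 2"
  by (simp add: raise_at_def)

lemma nth_raise_at:
  assumes "i \<le> length D" and "k < length D + 2"
  shows "raise_at D i ! k = (if k = i then Up else (D @ [Down, Down]) ! k)"
  using assms by (auto simp: raise_at_def nth_append nth_list_update)

lemma prefix_raise_at_iff:
  assumes "i \<le> length D" and "(D @ [Down]) ! i = Down"
  shows "prefix D (raise_at D i) \<longleftrightarrow> i = length D"
proof
  assume "prefix D (raise_at D i)"
  then obtain zs where "raise_at D i = D @ zs" by (auto simp: prefix_def)
  then have "i < length D \<Longrightarrow> raise_at D i ! i = D ! i" by (simp add: nth_append)
  then show "i = length D"
    using assms nth_raise_at[OF assms(1), of i] by (cases "i < length D") (auto simp: nth_append)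
qed (simp add: raise_at_def)

lemma first_diff_raise_at:
  assumes "i < length D" and "D ! i = Down"
  shows "first_diff D (raise_at D i) = Suc i"
  unfolding first_diff_def
proof (rule Least_equality)
  show "1 \<le> Suc i \<and> Suc i \<le> length D \<and> Suc i \<le> length (raise_at D i) \<and>
      D ! (Suc i - 1) \<noteq> raise_at D i ! (Suc i - 1)"
    using assms nth_raise_at[of i D i] by simp
next
  fix k
  assume "1 \<le> k \<and> k \<le> length D \<and> k \<le> length (raise_at D i) \<and> D ! (k - 1) \<noteq> raise_at D i ! (k - 1)"
  then show "Suc i \<le> k"
    using assms nth_raise_at[of i D "k - 1"] by (auto simp: nth_append split: if_splits)
qed

section \<open>Where the maximal letter is inserted\<close>

text \<open>The 0-based index of the step of the profile of u @ v that turns Up when the maximum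
is inserted between u and v; for v = [] it is the length of that profile.\<close>

definition insertion_step :: "nat list \<Rightarrow> nat list \<Rightarrow> nat" where
  "insertion_step u v =
    (if v = [] then 2 * length u else if hd v < last (0 # u) then 2 * last u - 2 else 2 * hd v - 1)"

lemma insertion_step_cases:
  assumes P: "is_perm n (u @ n # v)" and v: "v \<noteq> []"
  obtains (descent) "u \<noteq> []" "hd v < last u" "insertion_step u v = 2 * last u - 2"
    | (ascent) "last (0 # u) < hd v" "insertion_step u v = 2 * hd v - 1"
proof (cases "hd v < last (0 # u)")
  case True
  then have "u \<noteq> []" by auto
  with True show ?thesis using descent v by (simp add: insertion_step_def)
next
  case False
  note facts = is_perm_insert_max[OF P]
  have "hd v \<noteq> last (0 # u)"
    using facts(2) facts(3)[of "hd v"] v by (cases u rule: rev_cases; cases v) auto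
  with False show ?thesis using ascent v by (simp add: insertion_step_def)
qed

lemma nth_profile_neighbours_of_max:
  assumes P: "is_perm n (u @ n # v)"
  shows "u \<noteq> [] \<Longrightarrow> profile (u @ v) ! (2 * last u - 2) = up_if (last u < hd (v @ [n]))"
    and "v \<noteq> [] \<Longrightarrow> profile (u @ v) ! (2 * hd v - 1) = up_if (hd v < last (0 # u))"
proof -
  note facts = is_perm_insert_max[OF P]
  show "profile (u @ v) ! (2 * last u - 2) = up_if (last u < hd (v @ [n]))" if "u \<noteq> []"
  proof -
    obtain u' a where u: "u = u' @ [a]" using \<open>u \<noteq> []\<close> by (cases u rule: rev_cases) auto
    then have "0 < a" "a \<le> n - 1" using facts(3)[of a] by auto
    with u show ?thesis using nth_profile_letter(1)[of u' a v] facts(1,2,5) by simp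
  qed
  show "profile (u @ v) ! (2 * hd v - 1) = up_if (hd v < last (0 # u))" if v: "v \<noteq> []"
  proof -
    have "0 < hd v" "hd v \<le> n - 1" using facts(3)[of "hd v"] v by auto
    with v show ?thesis using nth_profile_letter(2)[of u "hd v" "tl v"] facts(1,2) by simp
  qed
qed

lemma insertion_step_raisable:
  assumes P: "is_perm n (u @ n # v)"
  shows "insertion_step u v \<le> length (profile (u @ v))"
    and "insertion_step u v < length (profile (u @ v)) \<longleftrightarrow> v \<noteq> []"
    and "(profile (u @ v) @ [Down]) ! insertion_step u v = Down"
proof -
  note facts = is_perm_insert_max[OF P]
  have lD: "length (profile (u @ v)) = 2 * (n - 1)" using facts(1) by (simp add: length_profile)
  have "insertion_step u v < 2 * (n - 1) \<and> profile (u @ v) ! insertion_step u v = Down"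
    if v: "v \<noteq> []"
    using P v
  proof (cases rule: insertion_step_cases)
    case descent
    then show ?thesis
      using nth_profile_neighbours_of_max(1)[OF P] v facts(3)[of "last u"] by (simp add: up_if_def)
  next
    case ascent
    then show ?thesis
      using nth_profile_neighbours_of_max(2)[OF P] v facts(3)[of "hd v"] by (simp add: up_if_def)
  qed
  moreover have "v = [] \<Longrightarrow> insertion_step u v = 2 * (n - 1)"
    using facts(1) by (simp add: insertion_step_def)
  ultimately show "insertion_step u v \<le> length (profile (u @ v))"
    and "insertion_step u v < length (profile (u @ v)) \<longleftrightarrow> v \<noteq> []"
    and "(profile (u @ v) @ [Down]) ! insertion_step u v = Down"
    using lD by (cases "v = []"; simp add: nth_append)+
qed

lemma insertion_step_at_neighbour:
  assumes P: "is_perm n (u @ n # v)" and v: "v \<noteq> []"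
  shows "u \<noteq> [] \<and> insertion_step u v = 2 * last u - 2 \<or> v \<noteq> [] \<and> insertion_step u v = 2 * hd v - 1"
  using P v by (cases rule: insertion_step_cases) (simp_all add: v)

lemma nth_profile_neighbour_of_max_Up:
  assumes P: "is_perm n (u @ n # v)"
    and k: "u \<noteq> [] \<and> k = 2 * last u - 2 \<or> v \<noteq> [] \<and> k = 2 * hd v - 1"
    and ki: "k \<noteq> insertion_step u v"
  shows "profile (u @ v) ! k = Up"
proof (cases "v = []")
  case True
  then show ?thesis
    using k nth_profile_neighbours_of_max(1)[OF P] is_perm_insert_max(3)[OF P, of "last u"]
    by (auto simp: up_if_def)
next
  case False
  from P False show ?thesis
  proof (cases rule: insertion_step_cases)
    case descent
    then show ?thesis using k ki nth_profile_neighbours_of_max(2)[OF P] by (auto simp: up_if_def)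
  next
    case ascent
    then show ?thesis using k ki False nth_profile_neighbours_of_max(1)[OF P] by (auto simp: up_if_def)
  qed
qed

lemma profile_insert_max:
  assumes P: "is_perm n (u @ n # v)"
  shows "profile (u @ n # v) = raise_at (profile (u @ v)) (insertion_step u v)"
proof (rule nth_equalityI)
  note facts = is_perm_insert_max[OF P]
  note raise = nth_raise_at[OF insertion_step_raisable(1)[OF P]]
  have lD: "length (profile (u @ v)) = 2 * (n - 1)" using facts(1) by (simp add: length_profile)
  then show "length (profile (u @ n # v)) = length (raise_at (profile (u @ v)) (insertion_step u v))"
    using facts(1,5) by (simp add: length_profile)
  fix k assume "k < length (profile (u @ n # v))"
  then have "k < 2 * n" using facts(1,5) by (simp add: length_profile)
  then consider (inner) "k < 2 * (n - 1)" | (peak) "k = 2 * n - 2" | (last) "k = 2 * n - 1"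
    by linarith
  then show "profile (u @ n # v) ! k = raise_at (profile (u @ v)) (insertion_step u v) ! k"
  proof cases
    case inner
    have "v \<noteq> []" if "k = insertion_step u v" using inner that facts(1) by (auto simp: insertion_step_def)
    then show ?thesis
      using nth_profile_insert_max[OF P inner] raise[of k] inner lD
        nth_profile_neighbour_of_max_Up[OF P, of k] insertion_step_at_neighbour[OF P]
      by (auto simp: nth_append)
  next
    case peak
    then have "k = insertion_step u v \<longleftrightarrow> v = []"
      using insertion_step_raisable(1,2)[OF P] lD facts(5) by auto
    then show ?thesis
      using profile_insert_max_last_steps(1)[OF P] raise[of k] peak facts(5) lD
      by (auto simp: nth_append)
  next
    case last
    then show ?thesis
      using profile_insert_max_last_steps(2)[OF P] raise[of k] insertion_step_raisable(1)[OF P] facts(5) lD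
      by (auto simp: nth_append)
  qed
qed

lemma insertion_step_locates_max:
  assumes P: "is_perm n (u @ n # v)" and v: "v \<noteq> []"
  defines "k \<equiv> Suc (insertion_step u v)"
  shows "odd k \<Longrightarrow> \<exists>u' v'. u @ v = u' @ [(k + 1) div 2] @ v' \<and> u @ n # v = u' @ [(k + 1) div 2, n] @ v'"
    and "even k \<Longrightarrow> \<exists>u' v'. u @ v = u' @ [k div 2] @ v' \<and> u @ n # v = u' @ [n, k div 2] @ v'"
proof -
  note facts = is_perm_insert_max[OF P]
  obtain b v' where v': "v = b # v'" using v by (cases v) auto
  from P v consider (descent) u' a where "u = u' @ [a]" "k = 2 * a - 1" "0 < a" | (ascent) "k = 2 * b"
  proof (cases rule: insertion_step_cases)
    case descent
    then obtain u' a where "u = u' @ [a]" by (cases u rule: rev_cases) auto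
    then show ?thesis using that(1) descent facts(3)[of a] unfolding k_def by simp
  next
    case ascent
    then show ?thesis using that(2) facts(3)[of b] v' unfolding k_def by simp
  qed
  note cases = this
  show "odd k \<Longrightarrow> \<exists>u' v'. u @ v = u' @ [(k + 1) div 2] @ v' \<and> u @ n # v = u' @ [(k + 1) div 2, n] @ v'"
    by (cases rule: cases) auto
  show "even k \<Longrightarrow> \<exists>u' v'. u @ v = u' @ [k div 2] @ v' \<and> u @ n # v = u' @ [n, k div 2] @ v'"
    by (cases rule: cases) (auto simp: v')
qed

section \<open>Heights and Dyck shapes\<close>

definition hgt :: "step list \<Rightarrow> nat \<Rightarrow> int" where
  "hgt P x = sum_list (map step_val (take x P))"

lemma height_int [simp]: "height P (int x) = hgt P x"
  by (simp add: height_def hgt_def)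

lemma height_int_Suc [simp]: "height P (int x + 1) = hgt P (Suc x)"
  by (metis height_int of_nat_Suc add.commute)

lemma hgt_append: "hgt (A @ B) x = hgt A x + hgt B (x - length A)"
  by (simp add: hgt_def)

lemma hgt_beyond: "length P \<le> x \<Longrightarrow> hgt P x = hgt P (length P)"
  by (simp add: hgt_def)

lemma hgt_Suc: "x < length P \<Longrightarrow> hgt P (Suc x) = hgt P x + step_val (P ! x)"
  by (simp add: hgt_def take_Suc_conv_app_nth)

lemma hgt_parity: "x \<le> length P \<Longrightarrow> even (hgt P x + int x)"
proof (induction x)
  case (Suc x)
  then show ?case by (simp add: hgt_Suc step_val_def)
qed (simp add: hgt_def)

lemma sum_list_list_update:
  fixes xs :: "'a::ab_group_add list"
  shows "i < length xs \<Longrightarrow> sum_list (xs[i := y]) = sum_list xs + y - xs ! i"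
  by (induction xs arbitrary: i) (auto split: nat.splits)

lemma hgt_list_update_Up:
  assumes "i < length D" and "D ! i = Down"
  shows "hgt (D[i := Up]) x = hgt D x + (if i < x then 2 else 0)"
proof (cases "i < x")
  case True
  have "hgt (D[i := Up]) x = sum_list ((map step_val (take x D))[i := 1])"
    by (simp add: hgt_def take_update_swap map_update step_val_def)
  also have "\<dots> = hgt D x + 2"
    using True assms by (simp add: hgt_def sum_list_list_update step_val_def)
  finally show ?thesis using True by simp
qed (simp add: hgt_def)

lemma dyck_iff_hgt:
  "dyck P \<longleftrightarrow> even (length P) \<and> (\<forall>x \<le> length P. 0 \<le> hgt P x) \<and> hgt P (length P) = 0"
  by (simp add: dyck_def)

lemma dyck_hgt_nonneg: "dyck P \<Longrightarrow> 0 \<le> hgt P x"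
  unfolding dyck_iff_hgt by (metis hgt_beyond nat_le_linear)

lemma dyck_shape_eq:
  assumes "hgt P (length P) = 0"
  shows "dyck_shape P = {(int a, b) | a b. 0 \<le> b \<and> even (int a + b) \<and> b + 1 \<le> hgt P (Suc a)}"
proof (intro set_eqI iffI)
  fix c assume "c \<in> dyck_shape P"
  then obtain a b where "c = (a, b)" "0 \<le> a" "0 \<le> b" "even (a + b)" "b + 1 \<le> height P (a + 1)"
    unfolding dyck_shape_def by blast
  moreover obtain a' where "a = int a'" using \<open>0 \<le> a\<close> nonneg_int_cases by blast
  ultimately show "c \<in> {(int a, b) | a b. 0 \<le> b \<and> even (int a + b) \<and> b + 1 \<le> hgt P (Suc a)}"
    by auto
next
  fix c assume "c \<in> {(int a, b) | a b. 0 \<le> b \<and> even (int a + b) \<and> b + 1 \<le> hgt P (Suc a)}"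
  then obtain a b where c: "c = (int a, b)" "0 \<le> b" "even (int a + b)" "b + 1 \<le> hgt P (Suc a)"
    by blast
  then have "Suc a < length P" using assms hgt_beyond[of P "Suc a"] by fastforce
  then show "c \<in> dyck_shape P"
    using c unfolding dyck_shape_def by auto
qed

lemma hgt_raise_at:
  assumes "i \<le> length D" and "(D @ [Down]) ! i = Down" and "hgt D (length D) = 0"
  shows "hgt (raise_at D i) x =
    hgt D x + (if i < x \<and> x \<le> length D then 2 else if x = Suc (length D) then 1 else 0)"
proof -
  have "hgt (raise_at D i) x = hgt (D @ [Down]) x + (if i < x then 2 else 0) + hgt [Down] (x - Suc (length D))"
    using assms(1,2) by (simp add: raise_at_def hgt_append hgt_list_update_Up)
  also have "hgt (D @ [Down]) x = hgt D x + hgt [Down] (x - length D)"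
    by (simp add: hgt_append)
  finally show ?thesis
    using assms(1,3) hgt_beyond[of D x]
    by (cases "x \<le> length D"; cases "x = Suc (length D)") (auto simp: hgt_def step_val_def)
qed

lemma rtrancl_consecutive:
  assumes "\<And>a. i \<le> a \<Longrightarrow> a < j \<Longrightarrow> (f a, f (Suc a)) \<in> r" and "i \<le> j"
  shows "(f i, f j) \<in> r\<^sup>*"
  using assms(2,1) by (induction j rule: dec_induct) (auto intro: rtrancl_into_rtrancl)

lemma ribbon_top_cells:
  assumes "i \<le> m" and "m < length E" and pos: "\<And>a. i \<le> a \<Longrightarrow> a \<le> m \<Longrightarrow> 1 \<le> hgt E (Suc a)"
  shows "ribbon ((\<lambda>a. (int a, hgt E (Suc a) - 1)) ` {i..m})"
proof -
  define f where "f = (\<lambda>a. (int a, hgt E (Suc a) - 1))"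
  define r where "r = {(c, d). c \<in> f ` {i..m} \<and> d \<in> f ` {i..m} \<and> adjacent c d}"
  have step: "(f a, f (Suc a)) \<in> r" if "i \<le> a" "a < m" for a
  proof -
    have "f a \<in> f ` {i..m}" "f (Suc a) \<in> f ` {i..m}" using that by auto
    moreover have "adjacent (f a) (f (Suc a))"
      using hgt_Suc[of "Suc a" E] that assms(2) unfolding f_def adjacent_def by (auto simp: step_val_def)
    ultimately show ?thesis unfolding r_def by blast
  qed
  have "sym r" unfolding r_def sym_def adjacent_def by auto
  have connected: "(f a, f a') \<in> r\<^sup>*" if "a \<in> {i..m}" "a' \<in> {i..m}" for a a'
  proof (cases "a \<le> a'")
    case True
    then show ?thesis using rtrancl_consecutive[of a a' f r] step that by auto
  next
    case False
    then have "(f a', f a) \<in> r\<^sup>*" using rtrancl_consecutive[of a' a f r] step that by auto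
    then show ?thesis using sym_rtrancl[OF \<open>sym r\<close>] unfolding sym_def by blast
  qed
  have "is_cell (f a)" if "a \<in> {i..m}" for a
    using hgt_parity[of "Suc a" E] pos[of a] that assms(2) unfolding is_cell_def f_def by auto
  moreover have "\<not> ((a + 1, b + 1) \<in> f ` {i..m} \<and> (a + 1, b - 1) \<in> f ` {i..m})" for a b
    unfolding f_def by auto
  ultimately show ?thesis
    using connected assms(1) unfolding ribbon_def cell_connected_def f_def[symmetric] r_def[symmetric]
    by auto
qed

context
  fixes D :: "step list" and i :: nat
  assumes dyck_D: "dyck D" and i_le: "i \<le> length D" and down: "(D @ [Down]) ! i = Down"
begin

lemma hgt_raise_at_dyck:
  "hgt (raise_at D i) x =
    hgt D x + (if i < x \<and> x \<le> length D then 2 else if x = Suc (length D) then 1 else 0)"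
  using hgt_raise_at[OF i_le down] dyck_D by (simp add: dyck_iff_hgt)

lemma hgt_le_hgt_raise_at: "hgt D x \<le> hgt (raise_at D i) x"
  using hgt_raise_at_dyck[of x] by simp

lemma hgt_raise_at_final: "hgt (raise_at D i) (length (raise_at D i)) = 0"
  using hgt_raise_at_dyck[of "length D + 2"] hgt_beyond[of D "length D + 2"] dyck_D
  by (simp add: dyck_iff_hgt)

lemma dyck_raise_at: "dyck (raise_at D i)"
  using dyck_D hgt_raise_at_final order_trans[OF dyck_hgt_nonneg[OF dyck_D] hgt_le_hgt_raise_at]
  unfolding dyck_iff_hgt by simp

lemma hgt_raise_at_pos: "i \<le> a \<Longrightarrow> a \<le> length D \<Longrightarrow> 1 \<le> hgt (raise_at D i) (Suc a)"
  using hgt_raise_at_dyck[of "Suc a"] dyck_hgt_nonneg[OF dyck_D, of "Suc a"] by auto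

lemma dyck_shape_raise_at_diff:
  "dyck_shape (raise_at D i) - dyck_shape D = (\<lambda>a. (int a, hgt (raise_at D i) (Suc a) - 1)) ` {i..length D}"
  (is "_ = ?top")
proof -
  let ?E = "raise_at D i"
  have D0: "hgt D (length D) = 0" using dyck_D by (simp add: dyck_iff_hgt)
  note shapes = dyck_shape_eq[OF D0] dyck_shape_eq[OF hgt_raise_at_final]
  have parity: "even (hgt ?E (Suc a) + int (Suc a))" if "a \<le> length D" for a
    using hgt_parity[of "Suc a" ?E] that by simp
  show ?thesis
  proof (intro set_eqI iffI)
    fix c assume "c \<in> dyck_shape ?E - dyck_shape D"
    then obtain a b where c: "c = (int a, b)" "0 \<le> b" "even (int a + b)"
      "b + 1 \<le> hgt ?E (Suc a)" "hgt D (Suc a) \<le> b"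
      unfolding shapes by auto
    then have a: "i \<le> a" "a \<le> length D" using hgt_raise_at_dyck[of "Suc a"] i_le by (auto split: if_splits)
    have same_parity_gap: "b = h - 1"
      if "even (h + int (Suc a))" "h \<le> d + 2" "b + 1 \<le> h" "d \<le> b" "even (int a + b)" for h d :: int
      using that by presburger
    have "hgt ?E (Suc a) \<le> hgt D (Suc a) + 2" using hgt_raise_at_dyck[of "Suc a"] by simp
    then have "b = hgt ?E (Suc a) - 1"
      using same_parity_gap[OF parity[OF a(2)]] c(3-5) by blast
    then show "c \<in> ?top" using c a by auto
  next
    fix c assume "c \<in> ?top"
    then obtain a where c: "c = (int a, hgt ?E (Suc a) - 1)" and a: "i \<le> a" "a \<le> length D" by auto
    have "hgt D (Suc a) < hgt ?E (Suc a)" using hgt_raise_at_dyck[of "Suc a"] a by auto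
    then show "c \<in> dyck_shape ?E - dyck_shape D"
      unfolding shapes c using hgt_raise_at_pos[OF a] parity[OF a(2)] by auto
  qed
qed

lemma ribbon_sub_raise_at: "ribbon_sub D (raise_at D i)"
proof -
  have D0: "hgt D (length D) = 0" using dyck_D by (simp add: dyck_iff_hgt)
  have "dyck_shape D \<subseteq> dyck_shape (raise_at D i)"
    unfolding dyck_shape_eq[OF D0] dyck_shape_eq[OF hgt_raise_at_final]
    using hgt_le_hgt_raise_at by (fastforce intro: order_trans)
  moreover have "ribbon (dyck_shape (raise_at D i) - dyck_shape D)"
    unfolding dyck_shape_raise_at_diff using ribbon_top_cells hgt_raise_at_pos i_le by simp
  ultimately show ?thesis
    unfolding ribbon_sub_def using dyck_D dyck_raise_at by simp
qed

end

lemma ribbon_sub_profile_insert_max: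
  assumes "is_perm n (u @ n # v)" and "dyck (profile (u @ v))"
  shows "ribbon_sub (profile (u @ v)) (profile (u @ n # v))"
  using ribbon_sub_raise_at[OF assms(2) insertion_step_raisable(1,3)[OF assms(1)]]
  by (simp add: profile_insert_max[OF assms(1)])

lemma prefix_profile_insert_max_iff:
  assumes "is_perm n (u @ n # v)"
  shows "prefix (profile (u @ v)) (profile (u @ n # v)) \<longleftrightarrow> v = []"
  using prefix_raise_at_iff[OF insertion_step_raisable(1,3)[OF assms]] insertion_step_raisable(1,2)[OF assms]
  by (auto simp: profile_insert_max[OF assms])

lemma first_diff_profile_insert_max:
  assumes "is_perm n (u @ n # v)" and "v \<noteq> []"
  shows "first_diff (profile (u @ v)) (profile (u @ n # v)) = Suc (insertion_step u v)"
  using first_diff_raise_at insertion_step_raisable(2,3)[OF assms(1)] assms(2)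
  by (simp add: profile_insert_max[OF assms(1)] nth_append)

lemma dyck_profile: "is_perm n s \<Longrightarrow> dyck (profile s)"
proof (induction n arbitrary: s)
  case 0
  then have "s = []" unfolding is_perm_def by simp
  then show ?case by (simp add: profile_def dyck_iff_hgt hgt_def)
next
  case (Suc n)
  then obtain u v where s: "s = u @ Suc n # v" using is_perm_max_split by blast
  then have "dyck (profile (u @ v))" using Suc is_perm_remove_max(1)[of "Suc n" u v] by simp
  then show ?case
    using ribbon_sub_profile_insert_max[of "Suc n" u v] Suc.prems s unfolding ribbon_sub_def by simp
qed

theorem mainTheorem6:
  fixes n :: nat and s :: "nat list"
  assumes "n \<ge> 1" and "is_perm n s"
  shows "ribbon_sub (profile (removeAll n s)) (profile s) \<and>
    (prefix (profile (removeAll n s)) (profile s) \<longrightarrow> s = removeAll n s @ [n]) \<and>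
    (\<not> prefix (profile (removeAll n s)) (profile s) \<longrightarrow>
       (let k = first_diff (profile (removeAll n s)) (profile s) in
         (odd k \<longrightarrow> (\<exists>u v. removeAll n s = u @ [(k + 1) div 2] @ v \<and> s = u @ [(k + 1) div 2, n] @ v)) \<and>
         (even k \<longrightarrow> (\<exists>u v. removeAll n s = u @ [k div 2] @ v \<and> s = u @ [n, k div 2] @ v))))"
proof -
  obtain u v where s: "s = u @ n # v" using is_perm_max_split[OF assms(2)] assms(1) by auto
  then have P: "is_perm n (u @ n # v)" using assms(2) by simp
  have "ribbon_sub (profile (u @ v)) (profile (u @ n # v))"
    using ribbon_sub_profile_insert_max[OF P dyck_profile[OF is_perm_remove_max(1)[OF P]]] .
  moreover have "u @ n # v = (u @ v) @ [n]" if "prefix (profile (u @ v)) (profile (u @ n # v))"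
    using that prefix_profile_insert_max_iff[OF P] by simp
  moreover have "let k = first_diff (profile (u @ v)) (profile (u @ n # v)) in
      (odd k \<longrightarrow> (\<exists>u' v'. u @ v = u' @ [(k + 1) div 2] @ v' \<and> u @ n # v = u' @ [(k + 1) div 2, n] @ v')) \<and>
      (even k \<longrightarrow> (\<exists>u' v'. u @ v = u' @ [k div 2] @ v' \<and> u @ n # v = u' @ [n, k div 2] @ v'))"
    if "\<not> prefix (profile (u @ v)) (profile (u @ n # v))"
  proof -
    have v: "v \<noteq> []" using that prefix_profile_insert_max_iff[OF P] by simp
    show ?thesis
      using insertion_step_locates_max[OF P v] unfolding first_diff_profile_insert_max[OF P v] Let_def
      by blast
  qed
  ultimately show ?thesis unfolding s is_perm_remove_max(2)[OF P] by blast
qed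

end
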